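(* Let $\mathcal{X} \in \{- \lambda \mathcal{E}_k, - \lambda \mathcal{F}_k\}$ where $1 \leq k \leq n$ and $\lambda \in R$. Suppose $v \cdot w^\intercal = 1$ for two vectors $v ,w \in R^{n+1}$ with $n \geq 2$. Then \[\begin{pmatrix} 1 & \mathcal{X}\\ 0 & 1 \end{pmatrix} \mathcal{S}(v,w) \begin{pmatrix} 1 & 0\\ -\overline{\mathcal{X}} & 1 \end{pmatrix} = \mathcal{S}(v\varepsilon,\, w (\varepsilon^{\intercal})^{-1}), \qquad \begin{pmatrix} 1 & 0\\ -\overline{\mathcal{X}} & 1 \end{pmatrix} \mathcal{S}(v,w) \begin{pmatrix} 1 & \mathcal{X} \\ 0 & 1 \end{pmatrix} = \mathcal{S}( v \sigma,\, w (\sigma^{\intercal})^{-1})\] for some $\varepsilon, \sigma \in E_{n+1}(R)$.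
   Context: $R$ is a commutative ring and $E_{m}(R)$ is the subgroup of $GL_m(R)$ generated by elementary matrices $1+\lambda e_{ij}$, $i\ne j$. For $v=(a_1,\dots,a_m), w=(b_1,\dots,b_m)\in R^m$, Suslin matrices are defined recursively: $\mathcal{S}_1(v,w)=\begin{pmatrix} a_1 & a_2\\ -b_2 & b_1\end{pmatrix}$, $\overline{\mathcal{S}_1(v,w)}=\begin{pmatrix} b_1 & -a_2\\ b_2 & a_1\end{pmatrix}$, and with $v=(a_1,v')$, $w=(b_1,w')$, $\mathcal{S}_{m-1}(v,w)=\begin{pmatrix} a_1 & \mathcal{S}_{m-2}(v',w')\\ -\overline{\mathcal{S}_{m-2}(v',w')} & b_1\end{pmatrix}$, $\overline{\mathcal{S}_{m-1}(v,w)}=\begin{pmatrix} b_1 & -\mathcal{S}_{m-2}(v',w')\\ \overline{\mathcal{S}_{m-2}(v',w')} & a_1\end{pmatrix}$. Here $\mathcal{S}(v,w)=\mathcal{S}_n(v,w)$ for $v,w\in R^{n+1}$, and $\mathcal{E}_k = \mathcal{S}_{n-1}(e_k,0)$, $\mathcal{F}_k=\mathcal{S}_{n-1}(0,f_k)$ with $e_k,f_k$ the standard basis vectors of $R^n$, $(R^n)^*$ (so $\mathcal{X}$ has the size of the off-diagonal block of $\mathcal{S}(v,w)$). *)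

theory Defs
  imports "Jordan_Normal_Form.Gauss_Jordan_Elimination"
begin

definition row_mult :: "'a :: comm_ring_1 vec \<Rightarrow> 'a mat \<Rightarrow> 'a vec" (infixl \<open>\<^sub>r*\<close> 70) where
  "v \<^sub>r* A = vec (dim_col A) (\<lambda>j. v \<bullet> col A j)"

(* Elementary matrix 1 + a e_{ij} of size m: addrow_mat m a i j.
   E_m(R): subgroup of GL_m(R) generated by elementary matrices with i \<noteq> j.
   (Closed under inverses automatically since (1+a e_ij)^{-1} = 1 - a e_ij.) *)
inductive_set elem_group :: "nat \<Rightarrow> 'a :: comm_ring_1 mat set" for m :: nat where
  one: "1\<^sub>m m \<in> elem_group m"
| step: "A \<in> elem_group m \<Longrightarrow> i < m \<Longrightarrow> j < m \<Longrightarrow> i \<noteq> j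
          \<Longrightarrow> A * addrow_mat m a i j \<in> elem_group m"

definition vtl :: "'a vec \<Rightarrow> 'a vec" where
  "vtl v = vec (dim_vec v - 1) (\<lambda>i. v $ (i + 1))"

(* Suslin matrices S_r(v,w) and their bars, for v, w of length r+1
   (coordinates v$0 = a_1, ..., v$r = a_{r+1}); S_r is 2^r x 2^r.
   The case r = 0 is not used in the paper (it gives the 1x1 matrix [a_1] / [b_1]). *)
fun suslin :: "nat \<Rightarrow> 'a :: comm_ring_1 vec \<Rightarrow> 'a vec \<Rightarrow> 'a mat"
and suslin_bar :: "nat \<Rightarrow> 'a :: comm_ring_1 vec \<Rightarrow> 'a vec \<Rightarrow> 'a mat" where
  "suslin 0 v w = mat 1 1 (\<lambda>_. v $ 0)"
| "suslin (Suc 0) v w = mat_of_rows_list 2 [[v $ 0, v $ 1], [- (w $ 1), w $ 0]]"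
| "suslin (Suc (Suc r)) v w =
     four_block_mat (v $ 0 \<cdot>\<^sub>m 1\<^sub>m (2 ^ Suc r)) (suslin (Suc r) (vtl v) (vtl w))
                    (- suslin_bar (Suc r) (vtl v) (vtl w)) (w $ 0 \<cdot>\<^sub>m 1\<^sub>m (2 ^ Suc r))"
| "suslin_bar 0 v w = mat 1 1 (\<lambda>_. w $ 0)"
| "suslin_bar (Suc 0) v w = mat_of_rows_list 2 [[w $ 0, - (v $ 1)], [w $ 1, v $ 0]]"
| "suslin_bar (Suc (Suc r)) v w =
     four_block_mat (w $ 0 \<cdot>\<^sub>m 1\<^sub>m (2 ^ Suc r)) (- suslin (Suc r) (vtl v) (vtl w))
                    (suslin_bar (Suc r) (vtl v) (vtl w)) (v $ 0 \<cdot>\<^sub>m 1\<^sub>m (2 ^ Suc r))"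

end

theory Submission
  imports Defs
begin

text \<open>
  In block form \<open>S(v,w)\<close> has diagonal blocks \<open>a\<^sub>1 1\<close>, \<open>b\<^sub>1 1\<close> and off-diagonal blocks
  \<open>S' = S\<^sub>n\<^sub>-\<^sub>1(v',w')\<close>, \<open>-S'bar\<close>. Conjugating it by the unipotent block matrices built from
  \<open>X = -c S\<^sub>n\<^sub>-\<^sub>1(p,q)\<close> with \<open>p \<bullet> q = 0\<close> only needs \<open>S(p,q) Sbar(p,q) = 0\<close> and the
  polarised identity \<open>S(p,q) Sbar(v',w') + S(v',w') Sbar(p,q) = (p \<bullet> w' + v' \<bullet> q) 1\<close>;
  by linearity of \<open>S\<close> the result is again a Suslin matrix, e.g. of
  \<open>(a\<^sub>1 + c (p \<bullet> w' + v' \<bullet> q), v' - b\<^sub>1 c p)\<close> and \<open>(b\<^sub>1, w' - b\<^sub>1 c q)\<close>.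
  For \<open>(p,q) = (e\<^sub>k,0)\<close> or \<open>(0,e\<^sub>k)\<close> this new pair is \<open>(v + (v \<bullet> x) y, w - (w \<bullet> y) x)\<close>
  for a transvection \<open>\<epsilon> = 1 + x\<^sup>T y\<close> with \<open>y \<bullet> x = 0\<close>, so that \<open>(\<epsilon>\<^sup>T)\<^sup>-\<^sup>1 = 1 - y\<^sup>T x\<close>.
  Such a transvection lies in \<open>E\<^sub>n\<^sub>+\<^sub>1(R)\<close> as soon as \<open>x\<close> or \<open>y\<close> has a zero coordinate
  \<open>l\<close>, which \<open>n \<ge> 2\<close> provides: the part of \<open>x\<^sup>T y\<close> with zero diagonal is a product of
  elementary matrices, and the rest is a commutator of two such products through \<open>l\<close>.
\<close>

section \<open>Elementary matrices and transvections\<close>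

definition one_plus_mat :: "nat \<Rightarrow> (nat \<Rightarrow> nat \<Rightarrow> 'a::comm_ring_1) \<Rightarrow> 'a mat" where
  "one_plus_mat m M = mat m m (\<lambda>(i, j). (if i = j then 1 else 0) + M i j)"

lemma one_plus_mat_carrier [simp]: "one_plus_mat m M \<in> carrier_mat m m"
  by (simp add: one_plus_mat_def)

lemma dim_one_plus_mat [simp]:
  "dim_row (one_plus_mat m M) = m" "dim_col (one_plus_mat m M) = m"
  by (simp_all add: one_plus_mat_def)

lemma index_one_plus_mat [simp]:
  "i < m \<Longrightarrow> j < m \<Longrightarrow> one_plus_mat m M $$ (i, j) = (if i = j then 1 else 0) + M i j"
  by (simp add: one_plus_mat_def)

lemma one_plus_mat_cong:
  "(\<And>i j. i < m \<Longrightarrow> j < m \<Longrightarrow> M i j = M' i j) \<Longrightarrow> one_plus_mat m M = one_plus_mat m M'"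
  by (rule eq_matI) auto

lemma one_plus_mat_zero: "one_plus_mat m (\<lambda>_ _. 0) = 1\<^sub>m m"
  by (rule eq_matI) auto

lemma transpose_one_plus_mat: "transpose_mat (one_plus_mat m M) = one_plus_mat m (\<lambda>i j. M j i)"
  by (rule eq_matI) auto

lemma addrow_mat_eq_one_plus_mat:
  "addrow_mat m a k l = one_plus_mat m (\<lambda>i j. (if i = k then a else 0) * (if j = l then 1 else 0))"
  by (rule eq_matI) (auto simp: addrow_mat_def)

lemma sum_mult_delta [simp]:
  "(\<Sum>l<m. f l * (if l = i then c else 0)) = (if i < (m::nat) then f i * c else (0::'a::comm_semiring_0))"
  by (simp add: if_distrib[of "times _"] cong: if_cong)

lemma sum_delta_mult [simp]:
  "(\<Sum>l<m. (if l = i then c else 0) * f l) = (if i < (m::nat) then c * f i else (0::'a::comm_semiring_0))"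
  by (simp add: if_distrib[of "\<lambda>a. a * _"] cong: if_cong)

lemma one_plus_mat_mult:
  "one_plus_mat m M * one_plus_mat m M' = one_plus_mat m (\<lambda>i j. M i j + M' i j + (\<Sum>l<m. M i l * M' l j))"
proof (rule eq_matI)
  fix i j assume "i < dim_row (one_plus_mat m (\<lambda>i j. M i j + M' i j + (\<Sum>l<m. M i l * M' l j)))"
    "j < dim_col (one_plus_mat m (\<lambda>i j. M i j + M' i j + (\<Sum>l<m. M i l * M' l j)))"
  then have i: "i < m" and j: "j < m" by auto
  have "(one_plus_mat m M * one_plus_mat m M') $$ (i, j)
      = (\<Sum>l<m. ((if i = l then 1 else 0) + M i l) * ((if l = j then 1 else 0) + M' l j))"
    using i j by (simp add: scalar_prod_def atLeast0LessThan)
  also have "\<dots> = (\<Sum>l<m. (if l = i then (if i = j then 1 else 0) + M' i j else 0)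
      + (if l = j then M i j else 0) + M i l * M' l j)"
    by (intro sum.cong) (auto simp: algebra_simps)
  also have "\<dots> = (if i = j then 1 else 0) + M i j + M' i j + (\<Sum>l<m. M i l * M' l j)"
    using i j by (simp add: sum.distrib)
  finally show "(one_plus_mat m M * one_plus_mat m M') $$ (i, j)
      = one_plus_mat m (\<lambda>i j. M i j + M' i j + (\<Sum>l<m. M i l * M' l j)) $$ (i, j)"
    using i j by simp
qed auto

lemma one_plus_outer_mult:
  "one_plus_mat m (\<lambda>i j. x i * y j) * one_plus_mat m (\<lambda>i j. u i * z j)
   = one_plus_mat m (\<lambda>i j. x i * y j + u i * z j + (\<Sum>l<m. y l * u l) * (x i * z j))"
  unfolding one_plus_mat_mult
  by (intro one_plus_mat_cong) (simp add: sum_distrib_left mult_ac)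

lemma elem_group_carrier: "A \<in> elem_group m \<Longrightarrow> A \<in> carrier_mat m m"
  by (induction rule: elem_group.induct) (auto simp: addrow_mat_def)

lemma elem_group_mult:
  assumes "A \<in> elem_group m" "B \<in> elem_group m"
  shows "A * B \<in> elem_group m"
  using assms(2)
proof (induction rule: elem_group.induct)
  case one
  show ?case using assms(1) elem_group_carrier[OF assms(1)] by simp
next
  case (step B i j a)
  have "A * (B * addrow_mat m a i j) = A * B * addrow_mat m a i j"
    using elem_group_carrier[OF assms(1)] elem_group_carrier[OF step.hyps(1)]
    by (simp add: assoc_mult_mat[of _ m m _ m _ m] addrow_mat_def)
  then show ?case using step elem_group.step by metis
qed

lemma addrow_mat_in_elem_group: "i < m \<Longrightarrow> j < m \<Longrightarrow> i \<noteq> j \<Longrightarrow> addrow_mat m a i j \<in> elem_group m"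
  using elem_group.step[OF elem_group.one, of i m j a] by (simp add: addrow_mat_def)

lemma elem_group_transpose: "A \<in> elem_group m \<Longrightarrow> transpose_mat A \<in> elem_group m"
proof (induction rule: elem_group.induct)
  case one
  show ?case by (simp add: elem_group.one)
next
  case (step A i j a)
  have "transpose_mat (addrow_mat m a i j) = addrow_mat m a j i"
    by (rule eq_matI) (auto simp: addrow_mat_def)
  then have "transpose_mat (A * addrow_mat m a i j) = addrow_mat m a j i * transpose_mat A"
    using elem_group_carrier[OF step.hyps(1)] by (simp add: transpose_mult[of _ m m _ m])
  then show ?case using step elem_group_mult addrow_mat_in_elem_group by metis
qed

lemma one_plus_row_in_elem_group:
  assumes i: "i < m" and yi: "y i = 0"
  shows "one_plus_mat m (\<lambda>r s. (if r = i then 1 else 0) * y s) \<in> elem_group m"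
proof -
  have partial: "one_plus_mat m (\<lambda>r s. (if r = i then 1 else 0) * (if s < N then y s else 0)) \<in> elem_group m" for N
  proof (induction N)
    case 0
    show ?case by (simp add: one_plus_mat_zero elem_group.one)
  next
    case (Suc N)
    show ?case
    proof (cases "N < m \<and> N \<noteq> i")
      case True
      have step: "one_plus_mat m (\<lambda>r s. (if r = i then 1 else 0) * (if s < N then y s else 0))
          * addrow_mat m (y N) i N
          = one_plus_mat m (\<lambda>r s. (if r = i then 1 else 0) * (if s < Suc N then y s else 0))"
        unfolding addrow_mat_eq_one_plus_mat one_plus_outer_mult
        by (intro one_plus_mat_cong) (use True yi in simp)
      have "addrow_mat m (y N) i N \<in> elem_group m"
        using True i by (intro addrow_mat_in_elem_group) auto
      from elem_group_mult[OF Suc.IH this] show ?thesis unfolding step .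
    next
      case False
      have "one_plus_mat m (\<lambda>r s. (if r = i then 1 else 0) * (if s < Suc N then y s else 0))
          = one_plus_mat m (\<lambda>r s. (if r = i then 1 else 0) * (if s < N then y s else 0))"
        by (intro one_plus_mat_cong) (use False yi in \<open>auto simp: less_Suc_eq\<close>)
      then show ?thesis using Suc.IH by simp
    qed
  qed
  have "one_plus_mat m (\<lambda>r s. (if r = i then 1 else 0) * (if s < m then y s else 0))
      = one_plus_mat m (\<lambda>r s. (if r = i then 1 else 0) * y s)"
    by (rule one_plus_mat_cong) simp
  then show ?thesis using partial[of m] by simp
qed

lemma one_plus_outer_zero_diag_in_elem_group:
  assumes diag: "\<And>i. i < m \<Longrightarrow> x i * y i = 0"
  shows "one_plus_mat m (\<lambda>i j. x i * y j) \<in> elem_group m"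
proof -
  have partial: "one_plus_mat m (\<lambda>i j. (if i < N then x i else 0) * y j) \<in> elem_group m" for N
  proof (induction N)
    case 0
    show ?case by (simp add: one_plus_mat_zero elem_group.one)
  next
    case (Suc N)
    show ?case
    proof (cases "N < m")
      case True
      have cross: "y N * (x i * (x N * y j)) = 0" for i j
      proof -
        have "y N * (x i * (x N * y j)) = x i * y j * (x N * y N)" by (simp add: mult_ac)
        then show ?thesis using diag[OF True] by simp
      qed
      have step: "one_plus_mat m (\<lambda>i j. (if i < N then x i else 0) * y j)
          * one_plus_mat m (\<lambda>i j. (if i = N then 1 else 0) * (x N * y j))
          = one_plus_mat m (\<lambda>i j. (if i < Suc N then x i else 0) * y j)"
        unfolding one_plus_outer_mult
        by (intro one_plus_mat_cong) (use True cross in \<open>simp add: less_Suc_eq\<close>)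
      have "one_plus_mat m (\<lambda>i j. (if i = N then 1 else 0) * (x N * y j)) \<in> elem_group m"
        using True diag[of N] by (intro one_plus_row_in_elem_group) (simp_all add: mult_ac)
      from elem_group_mult[OF Suc.IH this] show ?thesis unfolding step .
    next
      case False
      have "one_plus_mat m (\<lambda>i j. (if i < Suc N then x i else 0) * y j)
          = one_plus_mat m (\<lambda>i j. (if i < N then x i else 0) * y j)"
        by (intro one_plus_mat_cong) (use False in auto)
      then show ?thesis using Suc.IH by simp
    qed
  qed
  have "one_plus_mat m (\<lambda>i j. (if i < m then x i else 0) * y j)
      = one_plus_mat m (\<lambda>i j. x i * y j)"
    by (rule one_plus_mat_cong) simp
  then show ?thesis using partial[of m] by simp
qed

lemma one_plus_outer_eq_commutator:
  fixes x y :: "nat \<Rightarrow> 'a::comm_ring_1"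
  assumes l: "l < m" and xl: "x l = 0" and yl: "y l = 0" and yx: "(\<Sum>k<m. y k * x k) = 0"
  defines "e \<equiv> \<lambda>k. if k = l then 1 else 0"
  shows "one_plus_mat m (\<lambda>i j. x i * e j) * one_plus_mat m (\<lambda>i j. e i * y j)
       * one_plus_mat m (\<lambda>i j. - x i * e j) * one_plus_mat m (\<lambda>i j. - e i * y j)
       = one_plus_mat m (\<lambda>i j. x i * y j)"
proof -
  have ee: "(\<Sum>k<m. e k * e k) = 1" and ex: "(\<Sum>k<m. e k * x k) = 0" and ye: "(\<Sum>k<m. y k * e k) = 0"
    using l xl yl by (simp_all add: e_def)
  have "one_plus_mat m (\<lambda>i j. x i * e j) * one_plus_mat m (\<lambda>i j. e i * y j)
      = one_plus_mat m (\<lambda>i j. x i * e j + e i * y j + x i * y j)"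
    unfolding one_plus_outer_mult ee by simp
  also have "\<dots> * one_plus_mat m (\<lambda>i j. - x i * e j) = one_plus_mat m (\<lambda>i j. e i * y j + x i * y j)"
  proof -
    have "(\<Sum>k<m. (x i * e k + e i * y k + x i * y k) * (- x k * e j)) = 0" for i j
    proof -
      have "(\<Sum>k<m. (x i * e k + e i * y k + x i * y k) * (- x k * e j))
          = (\<Sum>k<m. - (x i * e j) * (e k * x k) - (e i + x i) * e j * (y k * x k))"
        by (rule sum.cong) (simp_all add: algebra_simps)
      also have "\<dots> = - (x i * e j) * (\<Sum>k<m. e k * x k) - (e i + x i) * e j * (\<Sum>k<m. y k * x k)"
        by (simp add: sum_subtractf sum_distrib_left)
      finally show ?thesis unfolding ex yx by simp
    qed
    then show ?thesis
      unfolding one_plus_mat_mult by (intro one_plus_mat_cong) simp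
  qed
  also have "\<dots> * one_plus_mat m (\<lambda>i j. - e i * y j) = one_plus_mat m (\<lambda>i j. x i * y j)"
  proof -
    have "(\<Sum>k<m. (e i * y k + x i * y k) * (- e k * y j)) = - (e i + x i) * y j * (\<Sum>k<m. y k * e k)" for i j
      unfolding sum_distrib_left by (rule sum.cong) (simp_all add: algebra_simps)
    then show ?thesis
      unfolding one_plus_mat_mult ye by (intro one_plus_mat_cong) simp
  qed
  finally show ?thesis .
qed

lemma one_plus_outer_zero_col_in_elem_group:
  fixes x y :: "nat \<Rightarrow> 'a::comm_ring_1"
  assumes l: "l < m" and yl: "y l = 0" and yx: "(\<Sum>k<m. y k * x k) = 0"
  shows "one_plus_mat m (\<lambda>i j. x i * y j) \<in> elem_group m"
proof -
  \<comment> \<open>Split \<open>x\<close> along the support of \<open>y\<close>: off the support, \<open>x y\<^sup>T\<close> has zero diagonal;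
    on it, \<open>x\<close> vanishes at \<open>l\<close>, so the commutator through \<open>l\<close> applies.\<close>
  define x1 where "x1 k = (if y k = 0 then 0 else x k)" for k
  define x2 where "x2 k = (if y k = 0 then x k else 0)" for k
  define e :: "nat \<Rightarrow> 'a" where "e k = (if k = l then 1 else 0)" for k
  have "(\<Sum>k<m. y k * x2 k) = 0"
    by (rule sum.neutral) (simp add: x2_def)
  then have split: "one_plus_mat m (\<lambda>i j. x i * y j)
      = one_plus_mat m (\<lambda>i j. x1 i * y j) * one_plus_mat m (\<lambda>i j. x2 i * y j)"
    unfolding one_plus_outer_mult by (intro one_plus_mat_cong) (simp add: x1_def x2_def algebra_simps)
  have "(\<Sum>k<m. y k * x1 k) = (\<Sum>k<m. y k * x k)"
    by (rule sum.cong) (simp_all add: x1_def)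
  then have "one_plus_mat m (\<lambda>i j. x1 i * y j)
      = one_plus_mat m (\<lambda>i j. x1 i * e j) * one_plus_mat m (\<lambda>i j. e i * y j)
      * one_plus_mat m (\<lambda>i j. - x1 i * e j) * one_plus_mat m (\<lambda>i j. - e i * y j)"
    using one_plus_outer_eq_commutator[of l m x1 y] l yl yx by (simp add: x1_def e_def)
  also have "\<dots> \<in> elem_group m"
    by (intro elem_group_mult one_plus_outer_zero_diag_in_elem_group) (simp_all add: x1_def e_def yl)
  finally show ?thesis
    unfolding split by (rule elem_group_mult[OF _ one_plus_outer_zero_diag_in_elem_group]) (simp add: x2_def)
qed

lemma one_plus_outer_in_elem_group:
  fixes x y :: "nat \<Rightarrow> 'a::comm_ring_1"
  assumes l: "l < m" and zero: "x l = 0 \<or> y l = 0" and yx: "(\<Sum>k<m. y k * x k) = 0"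
  shows "one_plus_mat m (\<lambda>i j. x i * y j) \<in> elem_group m"
  using zero
proof
  assume "x l = 0"
  moreover have "(\<Sum>k<m. x k * y k) = 0"
    using yx by (simp add: mult.commute)
  ultimately have "one_plus_mat m (\<lambda>i j. y i * x j) \<in> elem_group m"
    by (intro one_plus_outer_zero_col_in_elem_group[OF l])
  from elem_group_transpose[OF this] show ?thesis
    by (simp add: transpose_one_plus_mat mult.commute)
next
  assume "y l = 0"
  with l yx show ?thesis by (intro one_plus_outer_zero_col_in_elem_group)
qed

lemma vCons_add_vCons [simp]: "dim_vec v = dim_vec w \<Longrightarrow> vCons a v + vCons b w = vCons (a + b) (v + w)"
  by (rule eq_vecI) (simp_all add: vec_index_vCons)

lemma smult_vCons [simp]: "c \<cdot>\<^sub>v vCons a v = vCons (c * a) (c \<cdot>\<^sub>v v)"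
  by (rule eq_vecI) (simp_all add: vec_index_vCons)

lemma smult_zero_vec [simp]: "k \<cdot>\<^sub>v 0\<^sub>v n = (0\<^sub>v n :: 'a::mult_zero vec)"
  by (rule eq_vecI) simp_all

lemma zero_smult_vec [simp]: "(0::'a::mult_zero) \<cdot>\<^sub>v v = 0\<^sub>v (dim_vec v)"
  by (rule eq_vecI) simp_all

lemma row_mult_one_plus_outer:
  assumes "dim_vec v = m" "dim_vec x = m" "dim_vec y = m"
  shows "v \<^sub>r* one_plus_mat m (\<lambda>i j. x $ i * y $ j) = v + (v \<bullet> x) \<cdot>\<^sub>v y"
proof (rule eq_vecI)
  fix j assume "j < dim_vec (v + (v \<bullet> x) \<cdot>\<^sub>v y)"
  then have j: "j < m" using assms by simp
  have "(v \<^sub>r* one_plus_mat m (\<lambda>i j. x $ i * y $ j)) $ j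
      = (\<Sum>i<m. v $ i * (if i = j then 1 else 0) + v $ i * x $ i * y $ j)"
    using j assms by (simp add: row_mult_def scalar_prod_def atLeast0LessThan algebra_simps)
  also have "\<dots> = v $ j + (v \<bullet> x) * y $ j"
    using j assms by (simp add: sum.distrib scalar_prod_def atLeast0LessThan sum_distrib_right)
  finally show "(v \<^sub>r* one_plus_mat m (\<lambda>i j. x $ i * y $ j)) $ j = (v + (v \<bullet> x) \<cdot>\<^sub>v y) $ j"
    using j assms by simp
qed (simp add: row_mult_def assms)

definition elem_orbit :: "nat \<Rightarrow> 'a::comm_ring_1 vec \<Rightarrow> 'a vec \<Rightarrow> ('a vec \<times> 'a vec) set" where
  "elem_orbit m v w = {(v \<^sub>r* \<epsilon>, w \<^sub>r* \<rho>) | \<epsilon> \<rho>. \<epsilon> \<in> elem_group m \<and> \<rho> \<in> carrier_mat m m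
      \<and> \<rho> * transpose_mat \<epsilon> = 1\<^sub>m m \<and> transpose_mat \<epsilon> * \<rho> = 1\<^sub>m m}"

lemma bex_elem_orbit_iff:
  "(\<exists>(V, W) \<in> elem_orbit m v w. P V W) \<longleftrightarrow>
   (\<exists>\<epsilon> \<in> elem_group m. \<exists>\<rho>. \<rho> \<in> carrier_mat m m \<and> \<rho> * transpose_mat \<epsilon> = 1\<^sub>m m
      \<and> transpose_mat \<epsilon> * \<rho> = 1\<^sub>m m \<and> P (v \<^sub>r* \<epsilon>) (w \<^sub>r* \<rho>))"
  unfolding elem_orbit_def by blast

lemma transvection_in_elem_orbit:
  fixes v w x y :: "'a::comm_ring_1 vec"
  assumes dims: "dim_vec v = m" "dim_vec w = m" "dim_vec x = m" "dim_vec y = m"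
    and l: "l < m" "x $ l = 0 \<or> y $ l = 0" and yx: "y \<bullet> x = 0"
  shows "(v + (v \<bullet> x) \<cdot>\<^sub>v y, w + (- (w \<bullet> y)) \<cdot>\<^sub>v x) \<in> elem_orbit m v w"
proof -
  define \<epsilon> where "\<epsilon> = one_plus_mat m (\<lambda>i j. x $ i * y $ j)"
  define \<rho> where "\<rho> = one_plus_mat m (\<lambda>i j. (- y) $ i * x $ j)"
  have yx_sum: "(\<Sum>k<m. y $ k * x $ k) = 0" and xy_sum: "(\<Sum>k<m. x $ k * y $ k) = 0"
    using yx dims by (simp_all add: scalar_prod_def atLeast0LessThan mult.commute)
  have transpose: "transpose_mat \<epsilon> = one_plus_mat m (\<lambda>i j. y $ i * x $ j)"
    unfolding \<epsilon>_def transpose_one_plus_mat by (intro one_plus_mat_cong) (simp add: mult.commute)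
  have "\<epsilon> \<in> elem_group m"
    unfolding \<epsilon>_def using l yx_sum by (rule one_plus_outer_in_elem_group)
  moreover have "\<rho> \<in> carrier_mat m m"
    unfolding \<rho>_def by simp
  moreover have "\<rho> * transpose_mat \<epsilon> = 1\<^sub>m m" "transpose_mat \<epsilon> * \<rho> = 1\<^sub>m m"
    unfolding transpose \<rho>_def one_plus_outer_mult one_plus_mat_zero[symmetric]
    using dims xy_sum by (auto intro!: one_plus_mat_cong simp: sum_distrib_left[symmetric] sum_negf)
  ultimately have "(v \<^sub>r* \<epsilon>, w \<^sub>r* \<rho>) \<in> elem_orbit m v w"
    unfolding elem_orbit_def by blast
  moreover have "v \<^sub>r* \<epsilon> = v + (v \<bullet> x) \<cdot>\<^sub>v y" "w \<^sub>r* \<rho> = w + (- (w \<bullet> y)) \<cdot>\<^sub>v x"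
    unfolding \<epsilon>_def \<rho>_def using dims by (simp_all add: row_mult_one_plus_outer)
  ultimately show ?thesis by simp
qed

section \<open>Unipotent conjugation of block matrices\<close>

abbreviation upper_unipotent :: "nat \<Rightarrow> 'a::comm_ring_1 mat \<Rightarrow> 'a mat" where
  "upper_unipotent N X \<equiv> four_block_mat (1\<^sub>m N) X (0\<^sub>m N N) (1\<^sub>m N)"

abbreviation lower_unipotent :: "nat \<Rightarrow> 'a::comm_ring_1 mat \<Rightarrow> 'a mat" where
  "lower_unipotent N Y \<equiv> four_block_mat (1\<^sub>m N) (0\<^sub>m N N) Y (1\<^sub>m N)"

lemma four_block_mult_eq_smult_one:
  fixes P Q :: "'a::comm_ring_1 mat"
  assumes carrier: "P \<in> carrier_mat N N" "Q \<in> carrier_mat N N"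
    and PQ: "P * Q = s \<cdot>\<^sub>m 1\<^sub>m N" and QP: "Q * P = s \<cdot>\<^sub>m 1\<^sub>m N"
  shows "four_block_mat (x \<cdot>\<^sub>m 1\<^sub>m N) P (- Q) (y \<cdot>\<^sub>m 1\<^sub>m N)
       * four_block_mat (y \<cdot>\<^sub>m 1\<^sub>m N) (- P) Q (x \<cdot>\<^sub>m 1\<^sub>m N) = (x * y + s) \<cdot>\<^sub>m 1\<^sub>m (N + N)"
  using assms by (simp add: mult_four_block_mat[of _ N N _ N _ N _ _ N _ N])
    (auto intro!: eq_matI simp: mult_smult_assoc_mat[of _ N N] mult_smult_distrib[of _ N N] algebra_simps)

lemma four_block_conj_upper_lower:
  fixes S B E Eb :: "'a::comm_ring_1 mat"
  assumes carrier: "S \<in> carrier_mat N N" "B \<in> carrier_mat N N" "E \<in> carrier_mat N N" "Eb \<in> carrier_mat N N"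
    and null: "E * Eb = 0\<^sub>m N N" and polar: "E * B + S * Eb = t \<cdot>\<^sub>m 1\<^sub>m N"
  shows "upper_unipotent N ((- c) \<cdot>\<^sub>m E) * four_block_mat (a \<cdot>\<^sub>m 1\<^sub>m N) S (- B) (b \<cdot>\<^sub>m 1\<^sub>m N)
       * lower_unipotent N (- ((- c) \<cdot>\<^sub>m Eb))
     = four_block_mat ((a + c * t) \<cdot>\<^sub>m 1\<^sub>m N) (S + (- (b * c)) \<cdot>\<^sub>m E)
         (- (B + (- (b * c)) \<cdot>\<^sub>m Eb)) (b \<cdot>\<^sub>m 1\<^sub>m N)"
proof -
  have polar_entry: "row E i \<bullet> col B j = t * (if i = j then 1 else 0) - row S i \<bullet> col Eb j"
    if "i < N" "j < N" for i j
    using arg_cong[OF polar, of "\<lambda>A. A $$ (i, j)"] that carrier by (simp add: algebra_simps)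
  have "upper_unipotent N ((- c) \<cdot>\<^sub>m E) * four_block_mat (a \<cdot>\<^sub>m 1\<^sub>m N) S (- B) (b \<cdot>\<^sub>m 1\<^sub>m N)
     = four_block_mat (a \<cdot>\<^sub>m 1\<^sub>m N + c \<cdot>\<^sub>m (E * B)) (S + (- (b * c)) \<cdot>\<^sub>m E) (- B) (b \<cdot>\<^sub>m 1\<^sub>m N)"
    using carrier by (subst mult_four_block_mat[of _ N N _ N _ N _ _ N _ N])
      (auto intro!: cong_four_block_mat eq_matI simp: algebra_simps)
  also have "\<dots> * lower_unipotent N (- ((- c) \<cdot>\<^sub>m Eb))
     = four_block_mat ((a + c * t) \<cdot>\<^sub>m 1\<^sub>m N) (S + (- (b * c)) \<cdot>\<^sub>m E)
         (- (B + (- (b * c)) \<cdot>\<^sub>m Eb)) (b \<cdot>\<^sub>m 1\<^sub>m N)"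
  proof -
    have "(S + (- (b * c)) \<cdot>\<^sub>m E) * Eb = S * Eb"
      using carrier null by (simp add: add_mult_distrib_mat[of _ N N] mult_smult_assoc_mat[of _ N N])
    then have "(S + (- (b * c)) \<cdot>\<^sub>m E) * ((- c) \<cdot>\<^sub>m Eb) = (- c) \<cdot>\<^sub>m (S * Eb)"
      using carrier by (simp add: mult_smult_distrib[of _ N N])
    then have top_left: "a \<cdot>\<^sub>m 1\<^sub>m N + c \<cdot>\<^sub>m (E * B) + - ((S + (- (b * c)) \<cdot>\<^sub>m E) * ((- c) \<cdot>\<^sub>m Eb))
        = (a + c * t) \<cdot>\<^sub>m 1\<^sub>m N"
      using carrier by (auto intro!: eq_matI simp: polar_entry algebra_simps)
    have bottom_left: "- B + - (b \<cdot>\<^sub>m 1\<^sub>m N * ((- c) \<cdot>\<^sub>m Eb)) = - (B + (- (b * c)) \<cdot>\<^sub>m Eb)"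
      using carrier by (auto intro!: eq_matI simp: algebra_simps)
    show ?thesis
      using carrier by (subst mult_four_block_mat[of _ N N _ N _ N _ _ N _ N]) (simp_all add: top_left bottom_left)
  qed
  finally show ?thesis .
qed

lemma four_block_conj_lower_upper:
  fixes S B E Eb :: "'a::comm_ring_1 mat"
  assumes carrier: "S \<in> carrier_mat N N" "B \<in> carrier_mat N N" "E \<in> carrier_mat N N" "Eb \<in> carrier_mat N N"
    and null: "Eb * E = 0\<^sub>m N N" and polar: "Eb * S + B * E = t \<cdot>\<^sub>m 1\<^sub>m N"
  shows "lower_unipotent N (- ((- c) \<cdot>\<^sub>m Eb)) * four_block_mat (a \<cdot>\<^sub>m 1\<^sub>m N) S (- B) (b \<cdot>\<^sub>m 1\<^sub>m N)
       * upper_unipotent N ((- c) \<cdot>\<^sub>m E)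
     = four_block_mat (a \<cdot>\<^sub>m 1\<^sub>m N) (S + (- (a * c)) \<cdot>\<^sub>m E)
         (- (B + (- (a * c)) \<cdot>\<^sub>m Eb)) ((b + c * t) \<cdot>\<^sub>m 1\<^sub>m N)"
proof -
  have polar_entry: "row Eb i \<bullet> col S j = t * (if i = j then 1 else 0) - row B i \<bullet> col E j"
    if "i < N" "j < N" for i j
    using arg_cong[OF polar, of "\<lambda>A. A $$ (i, j)"] that carrier by (simp add: algebra_simps)
  have "lower_unipotent N (- ((- c) \<cdot>\<^sub>m Eb)) * four_block_mat (a \<cdot>\<^sub>m 1\<^sub>m N) S (- B) (b \<cdot>\<^sub>m 1\<^sub>m N)
     = four_block_mat (a \<cdot>\<^sub>m 1\<^sub>m N) S (- (B + (- (a * c)) \<cdot>\<^sub>m Eb)) (b \<cdot>\<^sub>m 1\<^sub>m N + c \<cdot>\<^sub>m (Eb * S))"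
    using carrier by (subst mult_four_block_mat[of _ N N _ N _ N _ _ N _ N])
      (auto intro!: cong_four_block_mat eq_matI simp: algebra_simps)
  also have "\<dots> * upper_unipotent N ((- c) \<cdot>\<^sub>m E)
     = four_block_mat (a \<cdot>\<^sub>m 1\<^sub>m N) (S + (- (a * c)) \<cdot>\<^sub>m E)
         (- (B + (- (a * c)) \<cdot>\<^sub>m Eb)) ((b + c * t) \<cdot>\<^sub>m 1\<^sub>m N)"
  proof -
    have "(B + (- (a * c)) \<cdot>\<^sub>m Eb) * E = B * E"
      using carrier null by (simp add: add_mult_distrib_mat[of _ N N] mult_smult_assoc_mat[of _ N N])
    then have "(B + (- (a * c)) \<cdot>\<^sub>m Eb) * ((- c) \<cdot>\<^sub>m E) = (- c) \<cdot>\<^sub>m (B * E)"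
      using carrier by (simp add: mult_smult_distrib[of _ N N])
    then have bottom_right: "- ((B + (- (a * c)) \<cdot>\<^sub>m Eb) * ((- c) \<cdot>\<^sub>m E)) + (b \<cdot>\<^sub>m 1\<^sub>m N + c \<cdot>\<^sub>m (Eb * S))
        = (b + c * t) \<cdot>\<^sub>m 1\<^sub>m N"
      using carrier by (auto intro!: eq_matI simp: polar_entry algebra_simps)
    have top_right: "a \<cdot>\<^sub>m 1\<^sub>m N * ((- c) \<cdot>\<^sub>m E) + S = S + (- (a * c)) \<cdot>\<^sub>m E"
      using carrier by (auto intro!: eq_matI simp: algebra_simps)
    show ?thesis
      using carrier by (subst mult_four_block_mat[of _ N N _ N _ N _ _ N _ N]) (simp_all add: bottom_right top_right)
  qed
  finally show ?thesis .
qed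

section \<open>Suslin matrices\<close>

lemma dim_vtl [simp]: "dim_vec (vtl v) = dim_vec v - 1"
  by (simp add: vtl_def)

lemma vtl_vCons [simp]: "vtl (vCons a v) = v"
  by (rule eq_vecI) (simp_all add: vtl_def)

lemma suslin_suslin_bar_carrier_mat:
  "suslin r v w \<in> carrier_mat (2 ^ r) (2 ^ r) \<and> suslin_bar r v w \<in> carrier_mat (2 ^ r) (2 ^ r)"
proof (induction r arbitrary: v w rule: induct_nat_012)
  case (ge2 r)
  have double: "(2::nat) ^ Suc (Suc r) = 2 ^ Suc r + 2 ^ Suc r" by simp
  show ?case
    unfolding double using ge2.IH(2) by (auto intro!: four_block_carrier_mat)
qed (simp_all add: mat_of_rows_list_def numeral_2_eq_2)

lemma suslin_carrier_mat [simp]: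
  "suslin r v w \<in> carrier_mat (2 ^ r) (2 ^ r)" "suslin_bar r v w \<in> carrier_mat (2 ^ r) (2 ^ r)"
  using suslin_suslin_bar_carrier_mat by auto

lemma dim_suslin [simp]:
  "dim_row (suslin r v w) = 2 ^ r" "dim_col (suslin r v w) = 2 ^ r"
  "dim_row (suslin_bar r v w) = 2 ^ r" "dim_col (suslin_bar r v w) = 2 ^ r"
  using carrier_matD[OF suslin_carrier_mat(1)] carrier_matD[OF suslin_carrier_mat(2)] by auto

lemma suslin_add_smult:
  assumes "dim_vec v = Suc r" "dim_vec v' = Suc r" "dim_vec w = Suc r" "dim_vec w' = Suc r"
  shows "suslin r (v + d \<cdot>\<^sub>v v') (w + d \<cdot>\<^sub>v w') = suslin r v w + d \<cdot>\<^sub>m suslin r v' w'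
       \<and> suslin_bar r (v + d \<cdot>\<^sub>v v') (w + d \<cdot>\<^sub>v w') = suslin_bar r v w + d \<cdot>\<^sub>m suslin_bar r v' w'"
  using assms
proof (induction r arbitrary: v v' w w' rule: induct_nat_012)
  case 0
  then show ?case by (auto intro!: eq_matI)
next
  case 1
  then show ?case by (auto intro!: eq_matI simp: mat_of_rows_list_def less_Suc_eq numeral_2_eq_2)
next
  case (ge2 r)
  have vtl: "vtl (v + d \<cdot>\<^sub>v v') = vtl v + d \<cdot>\<^sub>v vtl v'" "vtl (w + d \<cdot>\<^sub>v w') = vtl w + d \<cdot>\<^sub>v vtl w'"
    using ge2.prems by (auto simp: vtl_def)
  have IH: "suslin (Suc r) (vtl v + d \<cdot>\<^sub>v vtl v') (vtl w + d \<cdot>\<^sub>v vtl w')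
      = suslin (Suc r) (vtl v) (vtl w) + d \<cdot>\<^sub>m suslin (Suc r) (vtl v') (vtl w')"
    "suslin_bar (Suc r) (vtl v + d \<cdot>\<^sub>v vtl v') (vtl w + d \<cdot>\<^sub>v vtl w')
      = suslin_bar (Suc r) (vtl v) (vtl w) + d \<cdot>\<^sub>m suslin_bar (Suc r) (vtl v') (vtl w')"
    using ge2.IH(2)[of "vtl v" "vtl v'" "vtl w" "vtl w'"] ge2.prems by simp_all
  show ?case
    unfolding suslin.simps suslin_bar.simps vtl IH using ge2.prems
    by (auto intro!: eq_matI simp: algebra_simps)
qed

lemma suslin_mult_suslin_bar:
  assumes "dim_vec v = Suc r" "dim_vec w = Suc r"
  shows "suslin r v w * suslin_bar r v w = (v \<bullet> w) \<cdot>\<^sub>m 1\<^sub>m (2 ^ r)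
       \<and> suslin_bar r v w * suslin r v w = (v \<bullet> w) \<cdot>\<^sub>m 1\<^sub>m (2 ^ r)"
  using assms
proof (induction r arbitrary: v w rule: induct_nat_012)
  case 0
  then show ?case by (auto intro!: eq_matI simp: scalar_prod_def)
next
  case 1
  then show ?case
    by (auto intro!: eq_matI simp: mat_of_rows_list_def less_Suc_eq numeral_2_eq_2 scalar_prod_def algebra_simps)
next
  case (ge2 r)
  obtain a v' where v: "v = vCons a v'" using ge2.prems(1) by (cases v) auto
  obtain b w' where w: "w = vCons b w'" using ge2.prems(2) by (cases w) auto
  define N where "N = (2::nat) ^ Suc r"
  define S where "S = suslin (Suc r) v' w'"
  define B where "B = suslin_bar (Suc r) v' w'"
  have carrier: "S \<in> carrier_mat N N" "B \<in> carrier_mat N N"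
    unfolding S_def B_def N_def by (rule suslin_carrier_mat)+
  have IH: "S * B = (v' \<bullet> w') \<cdot>\<^sub>m 1\<^sub>m N" "B * S = (v' \<bullet> w') \<cdot>\<^sub>m 1\<^sub>m N"
    using ge2.IH(2)[of v' w'] ge2.prems unfolding v w S_def B_def N_def by simp_all
  have blocks: "suslin (Suc (Suc r)) v w = four_block_mat (a \<cdot>\<^sub>m 1\<^sub>m N) S (- B) (b \<cdot>\<^sub>m 1\<^sub>m N)"
    "suslin_bar (Suc (Suc r)) v w = four_block_mat (b \<cdot>\<^sub>m 1\<^sub>m N) (- S) B (a \<cdot>\<^sub>m 1\<^sub>m N)"
    unfolding v w S_def B_def N_def by simp_all
  have double: "(2::nat) ^ Suc (Suc r) = N + N" unfolding N_def by simp
  have "suslin (Suc (Suc r)) v w * suslin_bar (Suc (Suc r)) v w = (a * b + v' \<bullet> w') \<cdot>\<^sub>m 1\<^sub>m (N + N)"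
    unfolding blocks using four_block_mult_eq_smult_one[OF carrier IH] by simp
  moreover have "suslin_bar (Suc (Suc r)) v w * suslin (Suc (Suc r)) v w = (b * a + v' \<bullet> w') \<cdot>\<^sub>m 1\<^sub>m (N + N)"
    unfolding blocks using four_block_mult_eq_smult_one[of "- S" N "- B"] carrier IH by simp
  ultimately show ?case
    unfolding double v w by (simp add: mult.commute)
qed

lemma suslin_polarization:
  assumes dims: "dim_vec v = Suc r" "dim_vec w = Suc r" "dim_vec p = Suc r" "dim_vec q = Suc r"
  shows "suslin r p q * suslin_bar r v w + suslin r v w * suslin_bar r p q
         = (p \<bullet> w + v \<bullet> q) \<cdot>\<^sub>m 1\<^sub>m (2 ^ r)
       \<and> suslin_bar r p q * suslin r v w + suslin_bar r v w * suslin r p q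
         = (p \<bullet> w + v \<bullet> q) \<cdot>\<^sub>m 1\<^sub>m (2 ^ r)"
proof -
  define N where "N = (2::nat) ^ r"
  define S B S' B' where "S = suslin r v w" "B = suslin_bar r v w" "S' = suslin r p q" "B' = suslin_bar r p q"
  have carrier: "S \<in> carrier_mat N N" "B \<in> carrier_mat N N" "S' \<in> carrier_mat N N" "B' \<in> carrier_mat N N"
    unfolding S_B_S'_B'_def N_def by simp_all
  have "1 \<cdot>\<^sub>m A = A" for A :: "'a mat"
    by (rule eq_matI) simp_all
  then have sum: "suslin r (v + p) (w + q) = S + S'" "suslin_bar r (v + p) (w + q) = B + B'"
    using suslin_add_smult[OF dims(1,3,2,4), of 1] unfolding S_B_S'_B'_def by simp_all
  have "dim_vec (v + p) = Suc r" "dim_vec (w + q) = Suc r" using dims by simp_all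
  from suslin_mult_suslin_bar[OF this] suslin_mult_suslin_bar[OF dims(1,2)] suslin_mult_suslin_bar[OF dims(3,4)]
  have prods: "(S + S') * (B + B') = ((v + p) \<bullet> (w + q)) \<cdot>\<^sub>m 1\<^sub>m N" "(B + B') * (S + S') = ((v + p) \<bullet> (w + q)) \<cdot>\<^sub>m 1\<^sub>m N"
    "S * B = (v \<bullet> w) \<cdot>\<^sub>m 1\<^sub>m N" "B * S = (v \<bullet> w) \<cdot>\<^sub>m 1\<^sub>m N"
    "S' * B' = (p \<bullet> q) \<cdot>\<^sub>m 1\<^sub>m N" "B' * S' = (p \<bullet> q) \<cdot>\<^sub>m 1\<^sub>m N"
    unfolding sum S_B_S'_B'_def N_def by simp_all
  have vw: "(v + p) \<bullet> (w + q) = v \<bullet> w + (p \<bullet> w + v \<bullet> q) + p \<bullet> q"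
    using dims by (simp add: scalar_prod_def sum.distrib algebra_simps)
  have "(S' * B) $$ (i, j) + (S * B') $$ (i, j) = ((p \<bullet> w + v \<bullet> q) \<cdot>\<^sub>m 1\<^sub>m N) $$ (i, j)"
    "(B' * S) $$ (i, j) + (B * S') $$ (i, j) = ((p \<bullet> w + v \<bullet> q) \<cdot>\<^sub>m 1\<^sub>m N) $$ (i, j)"
    if "i < N" "j < N" for i j
  proof -
    have "(S * B + S' * B + (S * B' + S' * B')) $$ (i, j) = (((v + p) \<bullet> (w + q)) \<cdot>\<^sub>m 1\<^sub>m N) $$ (i, j)"
      "(B * S + B' * S + (B * S' + B' * S')) $$ (i, j) = (((v + p) \<bullet> (w + q)) \<cdot>\<^sub>m 1\<^sub>m N) $$ (i, j)"
      using prods(1,2) carrier by (simp_all add: add_mult_distrib_mat[of _ N N] mult_add_distrib_mat[of _ N N])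
    then show "(S' * B) $$ (i, j) + (S * B') $$ (i, j) = ((p \<bullet> w + v \<bullet> q) \<cdot>\<^sub>m 1\<^sub>m N) $$ (i, j)"
      "(B' * S) $$ (i, j) + (B * S') $$ (i, j) = ((p \<bullet> w + v \<bullet> q) \<cdot>\<^sub>m 1\<^sub>m N) $$ (i, j)"
      using that carrier prods(3-6) unfolding vw by (simp_all add: algebra_simps)
  qed
  then show ?thesis
    using carrier unfolding S_B_S'_B'_def[symmetric] N_def[symmetric] by (auto intro!: eq_matI)
qed

lemma suslin_conj_upper_lower:
  fixes v w p q :: "'a::comm_ring_1 vec"
  assumes dims: "dim_vec v = Suc (Suc r)" "dim_vec w = Suc (Suc r)" "dim_vec p = Suc (Suc r)" "dim_vec q = Suc (Suc r)"
    and pq: "p \<bullet> q = 0"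
  shows "upper_unipotent (2 ^ Suc r) ((- c) \<cdot>\<^sub>m suslin (Suc r) p q) * suslin (Suc (Suc r)) (vCons a v) (vCons b w)
       * lower_unipotent (2 ^ Suc r) (- ((- c) \<cdot>\<^sub>m suslin_bar (Suc r) p q))
     = suslin (Suc (Suc r)) (vCons (a + c * (p \<bullet> w + v \<bullet> q)) (v + (- (b * c)) \<cdot>\<^sub>v p))
         (vCons b (w + (- (b * c)) \<cdot>\<^sub>v q))"
proof -
  have null: "suslin (Suc r) p q * suslin_bar (Suc r) p q = 0\<^sub>m (2 ^ Suc r) (2 ^ Suc r)"
    using suslin_mult_suslin_bar[OF dims(3,4)] pq by (auto intro!: eq_matI)
  have polar: "suslin (Suc r) p q * suslin_bar (Suc r) v w + suslin (Suc r) v w * suslin_bar (Suc r) p q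
      = (p \<bullet> w + v \<bullet> q) \<cdot>\<^sub>m 1\<^sub>m (2 ^ Suc r)"
    using suslin_polarization[OF dims] by blast
  show ?thesis
    using four_block_conj_upper_lower[OF suslin_carrier_mat(1,2) suslin_carrier_mat(1,2) null polar,
        where a = a and b = b and c = c]
      suslin_add_smult[OF dims(1,3,2,4), of "- (b * c)"]
    by simp
qed

lemma suslin_conj_lower_upper:
  fixes v w p q :: "'a::comm_ring_1 vec"
  assumes dims: "dim_vec v = Suc (Suc r)" "dim_vec w = Suc (Suc r)" "dim_vec p = Suc (Suc r)" "dim_vec q = Suc (Suc r)"
    and pq: "p \<bullet> q = 0"
  shows "lower_unipotent (2 ^ Suc r) (- ((- c) \<cdot>\<^sub>m suslin_bar (Suc r) p q)) * suslin (Suc (Suc r)) (vCons a v) (vCons b w)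
       * upper_unipotent (2 ^ Suc r) ((- c) \<cdot>\<^sub>m suslin (Suc r) p q)
     = suslin (Suc (Suc r)) (vCons a (v + (- (a * c)) \<cdot>\<^sub>v p))
         (vCons (b + c * (p \<bullet> w + v \<bullet> q)) (w + (- (a * c)) \<cdot>\<^sub>v q))"
proof -
  have null: "suslin_bar (Suc r) p q * suslin (Suc r) p q = 0\<^sub>m (2 ^ Suc r) (2 ^ Suc r)"
    using suslin_mult_suslin_bar[OF dims(3,4)] pq by (auto intro!: eq_matI)
  have polar: "suslin_bar (Suc r) p q * suslin (Suc r) v w + suslin_bar (Suc r) v w * suslin (Suc r) p q
      = (p \<bullet> w + v \<bullet> q) \<cdot>\<^sub>m 1\<^sub>m (2 ^ Suc r)"
    using suslin_polarization[OF dims] by blast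
  show ?thesis
    using four_block_conj_lower_upper[OF suslin_carrier_mat(1,2) suslin_carrier_mat(1,2) null polar,
        where a = a and b = b and c = c]
      suslin_add_smult[OF dims(1,3,2,4), of "- (a * c)"]
    by simp
qed

section \<open>Conjugation by \<open>\<E>\<^sub>k\<close> and \<open>\<F>\<^sub>k\<close>\<close>

lemma suslin_conj_upper_lower_E_in_elem_orbit:
  fixes v w :: "'a::comm_ring_1 vec"
  assumes dims: "dim_vec v = Suc (Suc r)" "dim_vec w = Suc (Suc r)"
    and unimodular: "vCons a v \<bullet> vCons b w = 1" and j: "j < Suc (Suc r)"
  defines "E \<equiv> suslin (Suc r) (unit_vec (Suc (Suc r)) j) (0\<^sub>v (Suc (Suc r)))"
    and "Eb \<equiv> suslin_bar (Suc r) (unit_vec (Suc (Suc r)) j) (0\<^sub>v (Suc (Suc r)))"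
  shows "\<exists>(V, W) \<in> elem_orbit (Suc (Suc (Suc r))) (vCons a v) (vCons b w).
           upper_unipotent (2 ^ Suc r) ((- c) \<cdot>\<^sub>m E) * suslin (Suc (Suc r)) (vCons a v) (vCons b w)
             * lower_unipotent (2 ^ Suc r) (- ((- c) \<cdot>\<^sub>m Eb))
           = suslin (Suc (Suc r)) V W"
proof -
  let ?e = "unit_vec (Suc (Suc r)) j" and ?z = "0\<^sub>v (Suc (Suc r))"
  \<comment> \<open>\<open>1 + (b, w)\<^sup>T y\<close> adds \<open>y\<close> to \<open>(a, v)\<close>, as \<open>(a, v) \<bullet> (b, w) = 1\<close>, and fixes \<open>(b, w)\<close>,
    as \<open>(b, w) \<bullet> y = 0\<close>.\<close>
  define y where "y = vCons (c * w $ j) ((- (b * c)) \<cdot>\<^sub>v ?e)"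
  have carrier: "w \<in> carrier_vec (Suc (Suc r))" "v \<in> carrier_vec (Suc (Suc r))"
    using dims by (simp_all only: carrier_vecI)
  then have prods: "?e \<bullet> w = w $ j" "v \<bullet> ?z = 0" "?e \<bullet> ?z = 0" "y \<bullet> vCons b w = 0"
    using j dims by (simp_all add: y_def)
  have "upper_unipotent (2 ^ Suc r) ((- c) \<cdot>\<^sub>m E) * suslin (Suc (Suc r)) (vCons a v) (vCons b w)
       * lower_unipotent (2 ^ Suc r) (- ((- c) \<cdot>\<^sub>m Eb))
     = suslin (Suc (Suc r)) (vCons a v + (vCons a v \<bullet> vCons b w) \<cdot>\<^sub>v y)
         (vCons b w + (- (vCons b w \<bullet> y)) \<cdot>\<^sub>v vCons b w)"
    unfolding E_def Eb_def using suslin_conj_upper_lower[of v r w ?e ?z c a b] dims prods unimodular j carrier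
    by (simp add: y_def)
  moreover have "(vCons a v + (vCons a v \<bullet> vCons b w) \<cdot>\<^sub>v y, vCons b w + (- (vCons b w \<bullet> y)) \<cdot>\<^sub>v vCons b w)
      \<in> elem_orbit (Suc (Suc (Suc r))) (vCons a v) (vCons b w)"
  proof (rule transvection_in_elem_orbit)
    show "Suc (if j = 0 then 1 else 0) < Suc (Suc (Suc r))" by simp
    show "vCons b w $ Suc (if j = 0 then 1 else 0) = 0 \<or> y $ Suc (if j = 0 then 1 else 0) = 0"
      using j by (simp add: y_def)
  qed (use dims prods in \<open>simp_all add: y_def\<close>)
  ultimately show ?thesis by blast
qed

lemma suslin_conj_lower_upper_E_in_elem_orbit:
  fixes v w :: "'a::comm_ring_1 vec"
  assumes dims: "dim_vec v = Suc (Suc r)" "dim_vec w = Suc (Suc r)" and j: "j < Suc (Suc r)"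
  defines "E \<equiv> suslin (Suc r) (unit_vec (Suc (Suc r)) j) (0\<^sub>v (Suc (Suc r)))"
    and "Eb \<equiv> suslin_bar (Suc r) (unit_vec (Suc (Suc r)) j) (0\<^sub>v (Suc (Suc r)))"
  shows "\<exists>(V, W) \<in> elem_orbit (Suc (Suc (Suc r))) (vCons a v) (vCons b w).
           lower_unipotent (2 ^ Suc r) (- ((- c) \<cdot>\<^sub>m Eb)) * suslin (Suc (Suc r)) (vCons a v) (vCons b w)
             * upper_unipotent (2 ^ Suc r) ((- c) \<cdot>\<^sub>m E)
           = suslin (Suc (Suc r)) V W"
proof -
  let ?e = "unit_vec (Suc (Suc r)) j" and ?z = "0\<^sub>v (Suc (Suc r))"
  define x :: "'a vec" where "x = vCons (- c) ?z"
  define y :: "'a vec" where "y = vCons 0 ?e"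
  have carrier: "w \<in> carrier_vec (Suc (Suc r))" "v \<in> carrier_vec (Suc (Suc r))"
    using dims by (simp_all only: carrier_vecI)
  then have prods: "?e \<bullet> w = w $ j" "v \<bullet> ?z = 0" "?e \<bullet> ?z = 0" "w \<bullet> ?e = w $ j"
    using j by simp_all
  have "lower_unipotent (2 ^ Suc r) (- ((- c) \<cdot>\<^sub>m Eb)) * suslin (Suc (Suc r)) (vCons a v) (vCons b w)
       * upper_unipotent (2 ^ Suc r) ((- c) \<cdot>\<^sub>m E)
     = suslin (Suc (Suc r)) (vCons a v + (vCons a v \<bullet> x) \<cdot>\<^sub>v y) (vCons b w + (- (vCons b w \<bullet> y)) \<cdot>\<^sub>v x)"
    unfolding E_def Eb_def using suslin_conj_lower_upper[of v r w ?e ?z c a b] dims prods j carrier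
    by (simp add: x_def y_def mult.commute)
  moreover have "(vCons a v + (vCons a v \<bullet> x) \<cdot>\<^sub>v y, vCons b w + (- (vCons b w \<bullet> y)) \<cdot>\<^sub>v x)
      \<in> elem_orbit (Suc (Suc (Suc r))) (vCons a v) (vCons b w)"
    by (rule transvection_in_elem_orbit[where l = 1]) (use dims prods in \<open>simp_all add: x_def y_def\<close>)
  ultimately show ?thesis by blast
qed

lemma suslin_conj_upper_lower_F_in_elem_orbit:
  fixes v w :: "'a::comm_ring_1 vec"
  assumes dims: "dim_vec v = Suc (Suc r)" "dim_vec w = Suc (Suc r)" and j: "j < Suc (Suc r)"
  defines "F \<equiv> suslin (Suc r) (0\<^sub>v (Suc (Suc r))) (unit_vec (Suc (Suc r)) j)"
    and "Fb \<equiv> suslin_bar (Suc r) (0\<^sub>v (Suc (Suc r))) (unit_vec (Suc (Suc r)) j)"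
  shows "\<exists>(V, W) \<in> elem_orbit (Suc (Suc (Suc r))) (vCons a v) (vCons b w).
           upper_unipotent (2 ^ Suc r) ((- c) \<cdot>\<^sub>m F) * suslin (Suc (Suc r)) (vCons a v) (vCons b w)
             * lower_unipotent (2 ^ Suc r) (- ((- c) \<cdot>\<^sub>m Fb))
           = suslin (Suc (Suc r)) V W"
proof -
  let ?e = "unit_vec (Suc (Suc r)) j" and ?z = "0\<^sub>v (Suc (Suc r))"
  define x :: "'a vec" where "x = vCons 0 ?e"
  define y :: "'a vec" where "y = vCons c ?z"
  have carrier: "w \<in> carrier_vec (Suc (Suc r))" "v \<in> carrier_vec (Suc (Suc r))"
    using dims by (simp_all only: carrier_vecI)
  then have prods: "v \<bullet> ?e = v $ j" "?z \<bullet> w = 0" "?z \<bullet> ?e = 0" "w \<bullet> ?z = 0"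
    using j by simp_all
  have "upper_unipotent (2 ^ Suc r) ((- c) \<cdot>\<^sub>m F) * suslin (Suc (Suc r)) (vCons a v) (vCons b w)
       * lower_unipotent (2 ^ Suc r) (- ((- c) \<cdot>\<^sub>m Fb))
     = suslin (Suc (Suc r)) (vCons a v + (vCons a v \<bullet> x) \<cdot>\<^sub>v y) (vCons b w + (- (vCons b w \<bullet> y)) \<cdot>\<^sub>v x)"
    unfolding F_def Fb_def using suslin_conj_upper_lower[of v r w ?z ?e c a b] dims prods j carrier
    by (simp add: x_def y_def mult.commute)
  moreover have "(vCons a v + (vCons a v \<bullet> x) \<cdot>\<^sub>v y, vCons b w + (- (vCons b w \<bullet> y)) \<cdot>\<^sub>v x)
      \<in> elem_orbit (Suc (Suc (Suc r))) (vCons a v) (vCons b w)"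
    by (rule transvection_in_elem_orbit[where l = 1]) (use dims prods in \<open>simp_all add: x_def y_def\<close>)
  ultimately show ?thesis by blast
qed

lemma suslin_conj_lower_upper_F_in_elem_orbit:
  fixes v w :: "'a::comm_ring_1 vec"
  assumes dims: "dim_vec v = Suc (Suc r)" "dim_vec w = Suc (Suc r)"
    and unimodular: "vCons a v \<bullet> vCons b w = 1" and j: "j < Suc (Suc r)"
  defines "F \<equiv> suslin (Suc r) (0\<^sub>v (Suc (Suc r))) (unit_vec (Suc (Suc r)) j)"
    and "Fb \<equiv> suslin_bar (Suc r) (0\<^sub>v (Suc (Suc r))) (unit_vec (Suc (Suc r)) j)"
  shows "\<exists>(V, W) \<in> elem_orbit (Suc (Suc (Suc r))) (vCons a v) (vCons b w).
           lower_unipotent (2 ^ Suc r) (- ((- c) \<cdot>\<^sub>m Fb)) * suslin (Suc (Suc r)) (vCons a v) (vCons b w)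
             * upper_unipotent (2 ^ Suc r) ((- c) \<cdot>\<^sub>m F)
           = suslin (Suc (Suc r)) V W"
proof -
  let ?e = "unit_vec (Suc (Suc r)) j" and ?z = "0\<^sub>v (Suc (Suc r))"
  \<comment> \<open>\<open>1 + x\<^sup>T (a, v)\<close> fixes \<open>(a, v)\<close>, as \<open>(a, v) \<bullet> x = 0\<close>, and subtracts \<open>x\<close> from \<open>(b, w)\<close>,
    as \<open>(b, w) \<bullet> (a, v) = 1\<close>.\<close>
  define x where "x = vCons (- (c * v $ j)) ((a * c) \<cdot>\<^sub>v ?e)"
  have carrier: "w \<in> carrier_vec (Suc (Suc r))" "v \<in> carrier_vec (Suc (Suc r))"
    using dims by (simp_all only: carrier_vecI)
  then have prods: "v \<bullet> ?e = v $ j" "?z \<bullet> w = 0" "?z \<bullet> ?e = 0" "vCons a v \<bullet> x = 0"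
    "vCons b w \<bullet> vCons a v = 1"
    using j unimodular comm_scalar_prod[of w _ v] by (simp_all add: x_def mult.commute)
  have "lower_unipotent (2 ^ Suc r) (- ((- c) \<cdot>\<^sub>m Fb)) * suslin (Suc (Suc r)) (vCons a v) (vCons b w)
       * upper_unipotent (2 ^ Suc r) ((- c) \<cdot>\<^sub>m F)
     = suslin (Suc (Suc r)) (vCons a v + (vCons a v \<bullet> x) \<cdot>\<^sub>v vCons a v)
         (vCons b w + (- (vCons b w \<bullet> vCons a v)) \<cdot>\<^sub>v x)"
    unfolding F_def Fb_def using suslin_conj_lower_upper[of v r w ?z ?e c a b] dims prods j carrier
    by (simp add: x_def smult_smult_assoc)
  moreover have "(vCons a v + (vCons a v \<bullet> x) \<cdot>\<^sub>v vCons a v, vCons b w + (- (vCons b w \<bullet> vCons a v)) \<cdot>\<^sub>v x)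
      \<in> elem_orbit (Suc (Suc (Suc r))) (vCons a v) (vCons b w)"
  proof (rule transvection_in_elem_orbit)
    show "Suc (if j = 0 then 1 else 0) < Suc (Suc (Suc r))" by simp
    show "x $ Suc (if j = 0 then 1 else 0) = 0 \<or> vCons a v $ Suc (if j = 0 then 1 else 0) = 0"
      using j by (simp add: x_def)
  qed (use dims prods in \<open>simp_all add: x_def\<close>)
  ultimately show ?thesis by blast
qed

theorem lemma3p4:
  fixes v w :: "'a :: comm_ring_1 vec" and n k :: nat and c :: 'a
    and X Xbar :: "'a mat"
  assumes "n \<ge> 2"
    and "dim_vec v = n + 1" and "dim_vec w = n + 1"
    and "v \<bullet> w = 1"
    and "1 \<le> k" and "k \<le> n"
    and "(X = (- c) \<cdot>\<^sub>m suslin (n - 1) (unit_vec n (k - 1)) (0\<^sub>v n) \<and>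
          Xbar = (- c) \<cdot>\<^sub>m suslin_bar (n - 1) (unit_vec n (k - 1)) (0\<^sub>v n))
       \<or> (X = (- c) \<cdot>\<^sub>m suslin (n - 1) (0\<^sub>v n) (unit_vec n (k - 1)) \<and>
          Xbar = (- c) \<cdot>\<^sub>m suslin_bar (n - 1) (0\<^sub>v n) (unit_vec n (k - 1)))"
  shows "(\<exists>\<epsilon> \<in> elem_group (n + 1). \<exists>\<rho>. \<rho> \<in> carrier_mat (n + 1) (n + 1) \<and>
            \<rho> * transpose_mat \<epsilon> = 1\<^sub>m (n + 1) \<and> transpose_mat \<epsilon> * \<rho> = 1\<^sub>m (n + 1) \<and>
            four_block_mat (1\<^sub>m (2 ^ (n - 1))) X (0\<^sub>m (2 ^ (n - 1)) (2 ^ (n - 1))) (1\<^sub>m (2 ^ (n - 1)))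
              * suslin n v w
              * four_block_mat (1\<^sub>m (2 ^ (n - 1))) (0\<^sub>m (2 ^ (n - 1)) (2 ^ (n - 1))) (- Xbar) (1\<^sub>m (2 ^ (n - 1)))
            = suslin n (v \<^sub>r* \<epsilon>) (w \<^sub>r* \<rho>))
       \<and> (\<exists>\<sigma> \<in> elem_group (n + 1). \<exists>\<rho>. \<rho> \<in> carrier_mat (n + 1) (n + 1) \<and>
            \<rho> * transpose_mat \<sigma> = 1\<^sub>m (n + 1) \<and> transpose_mat \<sigma> * \<rho> = 1\<^sub>m (n + 1) \<and>
            four_block_mat (1\<^sub>m (2 ^ (n - 1))) (0\<^sub>m (2 ^ (n - 1)) (2 ^ (n - 1))) (- Xbar) (1\<^sub>m (2 ^ (n - 1)))
              * suslin n v w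
              * four_block_mat (1\<^sub>m (2 ^ (n - 1))) X (0\<^sub>m (2 ^ (n - 1)) (2 ^ (n - 1))) (1\<^sub>m (2 ^ (n - 1)))
            = suslin n (v \<^sub>r* \<sigma>) (w \<^sub>r* \<rho>))"
proof -
  obtain r where n: "n = Suc (Suc r)"
    using \<open>n \<ge> 2\<close> by (metis add_2_eq_Suc le_Suc_ex)
  obtain j where k: "k = Suc j" and j: "j < Suc (Suc r)"
    using \<open>1 \<le> k\<close> \<open>k \<le> n\<close> n by (cases k) auto
  obtain a v' where v: "v = vCons a v'" and v': "dim_vec v' = Suc (Suc r)"
    using \<open>dim_vec v = n + 1\<close> n by (cases v) auto
  obtain b w' where w: "w = vCons b w'" and w': "dim_vec w' = Suc (Suc r)"
    using \<open>dim_vec w = n + 1\<close> n by (cases w) auto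
  have unimodular: "vCons a v' \<bullet> vCons b w' = 1"
    using \<open>v \<bullet> w = 1\<close> v w by simp
  have index: "n - 1 = Suc r" "k - 1 = j" "n + 1 = Suc (Suc (Suc r))"
    using n k by simp_all
  show ?thesis
    using assms(7)
      suslin_conj_upper_lower_E_in_elem_orbit[OF v' w' unimodular j, of c]
      suslin_conj_lower_upper_E_in_elem_orbit[OF v' w' j, of a b c]
      suslin_conj_upper_lower_F_in_elem_orbit[OF v' w' j, of a b c]
      suslin_conj_lower_upper_F_in_elem_orbit[OF v' w' unimodular j, of c]
    unfolding index bex_elem_orbit_iff unfolding n v w by (elim disjE conjE) simp_all
qed

end
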